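(* Let $h$ be the height function of a single-species TASEP with arbitrary initial condition, and let $x(\cdot)$ be a backwards path with respect to $h$ started at some time $t$. Let $t_1<t_2$ in $[0,t]$ and $x_1,x_2\in\mathbb{Z}$, and suppose $x(t_1)\ge x_1$ and $x(t_2)\ge x_2$. Let $x^{\mathrm{step},l}(\tau)$, $\tau\in[t_1,t_2]$, be the leftmost backwards path with respect to $h^{\mathrm{step}}_{x_1,t_1}$ starting at time $t_2$ from position $x_2$, all processes being coupled by basic coupling. Then $x(\tau)\ge x^{\mathrm{step},l}(\tau)$ for all $\tau\in[t_1,t_2]$.
   Context: Single-species TASEP (graphical construction): independent rate-one Poisson processes $\mathcal{P}_z$, $z\in\mathbb{Z}$; at each ring of $\mathcal{P}_z$ (a jump attempt at site $z$) a particle at $z$, if any, jumps to $z+1$ if $z+1$ is empty. Basic coupling: several TASEPs are constructed with the same Poisson processes. A height function $h(j,s)$ of a TASEP satisfies $h(j,s)-h(j-1,s)=1-2\eta_s(j)$ ($\eta_s(j)=1$ iff a particle is at $j$), and each jump of a particle from $j$ to $j+1$ at time $s$ increases $h(j,\cdot)$ by $2$ and leaves all other values unchanged. For $y\in\mathbb{Z}$, $\tau\ge0$, $h^{\mathrm{step}}_{y,\tau}$ denotes the height function of the TASEP started at time $\tau$ from particles on all sites $\le y$ and holes on all sites $>y$, normalised by $h^{\mathrm{step}}_{y,\tau}(j,\tau)=|j-y|$. Backwards path with respect to a height function $h$, started at time $t$ from $x(t)=x$: a piecewise constant path defined going backwards in time; it changes only at times $s$ at which there is a jump attempt at site $x(s)$.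 At such a time: if a jump occurred, i.e. $h(x(s),s)=h(x(s),s^-)+2$, set $x(s^-)=x(s)$; otherwise choose $x(s^-)\in\{x(s)-1,x(s)+1\}$ such that $h(x(s^-),s)=h(x(s),s)-1$. The rightmost (resp. leftmost) backwards path always chooses $x(s)+1$ (resp. $x(s)-1$) when this choice is allowed. *)

theory Defs
  imports "HOL-Analysis.Analysis"
begin

text \<open>A realisation of the clocks is a
family P of point sets, P z = set of jump-attempt times at site z. We assume the
almost-sure properties of independent rate-one Poisson processes: all points are
positive, finitely many in every bounded time window, and distinct sites never ring
simultaneously.\<close>

definition clock_realisation :: "(int \<Rightarrow> real set) \<Rightarrow> bool" where
  "clock_realisation P \<longleftrightarrow>
     (\<forall>z. P z \<subseteq> {0<..}) \<and>
     (\<forall>z T. finite (P z \<inter> {..T})) \<and>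
     (\<forall>z z'. z \<noteq> z' \<longrightarrow> P z \<inter> P z' = {})"

definition hleft :: "(int \<Rightarrow> real \<Rightarrow> int) \<Rightarrow> int \<Rightarrow> real \<Rightarrow> int" where
  "hleft h j s = Lim (at_left s) (h j)"

definition occupied :: "(int \<Rightarrow> int) \<Rightarrow> int \<Rightarrow> bool" where
  "occupied g j \<longleftrightarrow> g j - g (j - 1) = -1"

text \<open>h is the height function of a TASEP started at time tau (arbitrary initial
condition) and driven by the clocks P: increments are +-1; h(j,.) is constant between
jump attempts at site j (right-continuous); at a jump attempt at site j at time s the
particle at j (if any) jumps to j+1 if j+1 is empty, which increases h(j,.) by 2.\<close>
definition tasep_height :: "(int \<Rightarrow> real set) \<Rightarrow> real \<Rightarrow> (int \<Rightarrow> real \<Rightarrow> int) \<Rightarrow> bool" where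
  "tasep_height P \<tau> h \<longleftrightarrow>
     (\<forall>j s. \<tau> \<le> s \<longrightarrow> h j s - h (j - 1) s \<in> {-1, 1}) \<and>
     (\<forall>j s s'. \<tau> \<le> s \<and> s \<le> s' \<and> P j \<inter> {s<..s'} = {} \<longrightarrow> h j s' = h j s) \<and>
     (\<forall>j s. s \<in> P j \<and> \<tau> < s \<longrightarrow>
        h j s = hleft h j s +
          (if occupied (\<lambda>k. hleft h k s) j \<and> \<not> occupied (\<lambda>k. hleft h k s) (j + 1)
           then 2 else 0))"

definition step_height :: "(int \<Rightarrow> real set) \<Rightarrow> int \<Rightarrow> real \<Rightarrow> (int \<Rightarrow> real \<Rightarrow> int) \<Rightarrow> bool" where
  "step_height P y \<tau> h \<longleftrightarrow> tasep_height P \<tau> h \<and> (\<forall>j. h j \<tau> = \<bar>j - y\<bar>)"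

definition backwards_path ::
  "(int \<Rightarrow> real set) \<Rightarrow> (int \<Rightarrow> real \<Rightarrow> int) \<Rightarrow> real \<Rightarrow> real \<Rightarrow> (real \<Rightarrow> int) \<Rightarrow> bool" where
  "backwards_path P h a t x \<longleftrightarrow>
     (\<forall>s. a \<le> s \<and> s < t \<longrightarrow> (x \<longlongrightarrow> x s) (at_right s)) \<and>
     (\<forall>s. a < s \<and> s \<le> t \<longrightarrow> (\<exists>v. (x \<longlongrightarrow> v) (at_left s) \<and>
        (s \<notin> P (x s) \<longrightarrow> v = x s) \<and>
        (s \<in> P (x s) \<and> h (x s) s = hleft h (x s) s + 2 \<longrightarrow> v = x s) \<and>
        (s \<in> P (x s) \<and> h (x s) s \<noteq> hleft h (x s) s + 2 \<longrightarrow>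
           (v = x s - 1 \<or> v = x s + 1) \<and> h v s = h (x s) s - 1)))"

definition leftmost_backwards_path ::
  "(int \<Rightarrow> real set) \<Rightarrow> (int \<Rightarrow> real \<Rightarrow> int) \<Rightarrow> real \<Rightarrow> real \<Rightarrow> (real \<Rightarrow> int) \<Rightarrow> bool" where
  "leftmost_backwards_path P h a t x \<longleftrightarrow>
     backwards_path P h a t x \<and>
     (\<forall>s. a < s \<and> s \<le> t \<and> s \<in> P (x s) \<and> h (x s) s \<noteq> hleft h (x s) s + 2 \<and>
          h (x s - 1) s = h (x s) s - 1 \<longrightarrow> (x \<longlongrightarrow> x s - 1) (at_left s))"

end

theory Submission
  imports Defs
begin

text \<open>Call a particle of the step TASEP at a site j > x(s) unmatched if h has no particle at j.
There is none at time t1, since the step TASEP has no particles to the right of x1 \<le> x(t1), and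
none is ever created: at the first time an unmatched particle shows up at j, inspecting the one
clock ring at that time shows that just before there was an unmatched particle either at j,
contradicting the choice of that time, or at a neighbouring site where the step height function
is strictly smaller (x cannot stand on the left neighbour, as it would then see a jump of h),
which is excluded by induction on that height.

Now let sigma be the infimum of the times after which xstep \<le> x holds. At sigma both paths sit
at the same site b and the clock at b rings. If h jumps there, x stays and xstep would have to
step right across a particle of the step TASEP at b + 1 that h lacks; otherwise x steps left
across a hole of h at b, which is then also a hole of the step TASEP, so the leftmost path steps
left as well. Either way xstep \<le> x holds just before sigma, a contradiction.\<close>

lemma switch_time_exists:
  fixes Q :: "real \<Rightarrow> bool"
  assumes "a \<le> b" "\<not> Q a" "Q b"
    and persist: "\<And>r. a \<le> r \<Longrightarrow> r < b \<Longrightarrow> \<not> Q r \<Longrightarrow> eventually (\<lambda>r'. \<not> Q r') (at_right r)"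
  obtains \<sigma> where "a < \<sigma>" "\<sigma> \<le> b" "Q \<sigma>" "\<exists>\<^sub>F r in at_left \<sigma>. \<not> Q r"
proof -
  define S where "S = {r. a \<le> r \<and> r \<le> b \<and> \<not> Q r}"
  define \<sigma> where "\<sigma> = Sup S"
  have "a \<in> S" using assms(1,2) by (simp add: S_def)
  have bdd: "bdd_above S" by (auto simp: S_def bdd_above_def)
  have le_\<sigma>: "r \<le> \<sigma>" if "r \<in> S" for r
    unfolding \<sigma>_def using that bdd by (rule cSup_upper)
  have "\<sigma> \<le> b"
    unfolding \<sigma>_def using \<open>a \<in> S\<close> by (intro cSup_least) (auto simp: S_def)
  have "a \<le> \<sigma>" using le_\<sigma>[OF \<open>a \<in> S\<close>] .
  have "Q \<sigma>"
  proof (rule ccontr)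
    assume "\<not> Q \<sigma>"
    with \<open>Q b\<close> \<open>\<sigma> \<le> b\<close> have "\<sigma> < b" by (cases "\<sigma> = b") auto
    have "eventually (\<lambda>r. \<not> Q r \<and> r \<in> {\<sigma><..<b}) (at_right \<sigma>)"
      using persist[OF \<open>a \<le> \<sigma>\<close> \<open>\<sigma> < b\<close> \<open>\<not> Q \<sigma>\<close>] eventually_at_right_real[OF \<open>\<sigma> < b\<close>]
      by eventually_elim simp
    then obtain r where "\<not> Q r" "\<sigma> < r" "r < b"
      using eventually_happens'[OF trivial_limit_at_right_real] by auto
    then have "r \<in> S" using \<open>a \<le> \<sigma>\<close> by (simp add: S_def)
    with le_\<sigma> \<open>\<sigma> < r\<close> show False by fastforce
  qed
  have "\<exists>\<^sub>F r in at_left \<sigma>. \<not> Q r"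
    unfolding frequently_def
  proof
    assume "eventually (\<lambda>r. \<not> \<not> Q r) (at_left \<sigma>)"
    then obtain c where "c < \<sigma>" and c: "\<And>r. c < r \<Longrightarrow> r < \<sigma> \<Longrightarrow> Q r"
      unfolding eventually_at_left_field by auto
    have "r \<le> c" if "r \<in> S" for r
      using le_\<sigma>[OF that] that c[of r] \<open>Q \<sigma>\<close> by (force simp: S_def)
    then have "\<sigma> \<le> c"
      unfolding \<sigma>_def using \<open>a \<in> S\<close> by (intro cSup_least) auto
    with \<open>c < \<sigma>\<close> show False by simp
  qed
  moreover have "a < \<sigma>"
    using \<open>a \<le> \<sigma>\<close> \<open>Q \<sigma>\<close> \<open>\<not> Q a\<close> by (cases "a = \<sigma>") auto
  ultimately show ?thesis
    using that \<open>\<sigma> \<le> b\<close> \<open>Q \<sigma>\<close> by blast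
qed

lemma tasep_height_increment: "tasep_height P \<tau> h \<Longrightarrow> \<tau> \<le> s \<Longrightarrow> h j s - h (j - 1) s \<in> {-1, 1}"
  unfolding tasep_height_def by blast

lemma tasep_height_const:
  "tasep_height P \<tau> h \<Longrightarrow> \<tau> \<le> s \<Longrightarrow> s \<le> s' \<Longrightarrow> P j \<inter> {s<..s'} = {} \<Longrightarrow> h j s' = h j s"
  unfolding tasep_height_def by blast

lemma tasep_height_jump:
  "tasep_height P \<tau> h \<Longrightarrow> \<tau> < s \<Longrightarrow> s \<in> P j \<Longrightarrow>
     h j s = hleft h j s +
       (if occupied (\<lambda>k. hleft h k s) j \<and> \<not> occupied (\<lambda>k. hleft h k s) (j + 1) then 2 else 0)"
  unfolding tasep_height_def by blast

lemma backwards_path_eventually_right: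
  assumes "backwards_path P h a t x" "a \<le> s" "s < t"
  shows "eventually (\<lambda>r. x r = x s) (at_right s)"
  using assms unfolding backwards_path_def tendsto_discrete[symmetric] by blast

lemma backwards_path_left_limit_exists:
  assumes "backwards_path P h a t x" "a < s" "s \<le> t"
  shows "\<exists>v. (x \<longlongrightarrow> v) (at_left s)"
  using assms unfolding backwards_path_def by blast

lemma backwards_path_left_limit:
  assumes "backwards_path P h a t x" "a < s" "s \<le> t" and v: "(x \<longlongrightarrow> v) (at_left s)"
  shows "v = x s \<longleftrightarrow> s \<notin> P (x s) \<or> h (x s) s = hleft h (x s) s + 2"
    and "v \<noteq> x s \<Longrightarrow> (v = x s - 1 \<or> v = x s + 1) \<and> h v s = h (x s) s - 1"
proof -
  obtain v' where v': "(x \<longlongrightarrow> v') (at_left s)" "s \<notin> P (x s) \<longrightarrow> v' = x s"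
    "s \<in> P (x s) \<and> h (x s) s = hleft h (x s) s + 2 \<longrightarrow> v' = x s"
    "s \<in> P (x s) \<and> h (x s) s \<noteq> hleft h (x s) s + 2 \<longrightarrow>
       (v' = x s - 1 \<or> v' = x s + 1) \<and> h v' s = h (x s) s - 1"
    using assms(1-3) unfolding backwards_path_def by blast
  have "v = v'"
    using tendsto_unique[OF trivial_limit_at_left_real v v'(1)] .
  then show "v = x s \<longleftrightarrow> s \<notin> P (x s) \<or> h (x s) s = hleft h (x s) s + 2"
    and "v \<noteq> x s \<Longrightarrow> (v = x s - 1 \<or> v = x s + 1) \<and> h v s = h (x s) s - 1"
    using v'(2-4) by auto
qed

lemma leftmost_backwards_path_left_limit:
  assumes "leftmost_backwards_path P h a t x" "a < s" "s \<le> t" "(x \<longlongrightarrow> v) (at_left s)"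
    and "s \<in> P (x s)" "h (x s) s \<noteq> hleft h (x s) s + 2" "h (x s - 1) s = h (x s) s - 1"
  shows "v = x s - 1"
  using assms tendsto_unique[OF trivial_limit_at_left_real assms(4)]
  unfolding leftmost_backwards_path_def by blast

definition unmatched_particle :: "(int \<Rightarrow> int) \<Rightarrow> (int \<Rightarrow> int) \<Rightarrow> int \<Rightarrow> int \<Rightarrow> bool" where
  "unmatched_particle g f y j \<longleftrightarrow> y < j \<and> occupied g j \<and> \<not> occupied f j"

context
  fixes P :: "int \<Rightarrow> real set"
  assumes clock: "clock_realisation P"
begin

lemma clock_realisation_disjoint: "s \<in> P z \<Longrightarrow> s \<in> P z' \<Longrightarrow> z = z'"
  using clock unfolding clock_realisation_def by blast

lemma eventually_at_right_no_clock: "eventually (\<lambda>r. P j \<inter> {s<..r} = {}) (at_right s)"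
proof -
  let ?A = "P j \<inter> {s<..s + 1}"
  have "finite (P j \<inter> {..s + 1})"
    using clock unfolding clock_realisation_def by blast
  then have "finite ?A"
    by (rule finite_subset[rotated]) auto
  then have "eventually (\<lambda>r. \<forall>p\<in>?A. r < p) (at_right s)"
    by (rule eventually_ball_finite) (auto intro: eventually_mono[OF eventually_at_right_real])
  moreover have "eventually (\<lambda>r. r < s + 1) (at_right s)"
    using eventually_at_right_real[of s "s + 1"] by (auto elim: eventually_mono)
  ultimately show ?thesis
  proof eventually_elim
    case (elim r)
    have False if "p \<in> P j" "s < p" "p \<le> r" for p
    proof -
      have "p \<in> ?A" using that elim(2) by auto
      with elim(1) have "r < p" by blast
      with that(3) show False by simp
    qed
    then show ?case by auto
  qed
qed

lemma eventually_at_left_no_clock: "eventually (\<lambda>r. P j \<inter> {r<..<s} = {}) (at_left s)"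
proof -
  let ?A = "P j \<inter> {s - 1<..<s}"
  have "finite (P j \<inter> {..s})"
    using clock unfolding clock_realisation_def by blast
  then have "finite ?A"
    by (rule finite_subset[rotated]) auto
  then have "eventually (\<lambda>r. \<forall>p\<in>?A. p < r) (at_left s)"
    by (rule eventually_ball_finite) (auto intro: eventually_mono[OF eventually_at_left_real])
  moreover have "eventually (\<lambda>r. s - 1 < r) (at_left s)"
    using eventually_at_left_real[of "s - 1" s] by (auto elim: eventually_mono)
  ultimately show ?thesis
  proof eventually_elim
    case (elim r)
    have False if "p \<in> P j" "r < p" "p < s" for p
    proof -
      have "p \<in> ?A" using that elim(2) by auto
      with elim(1) have "p < r" by blast
      with that(2) show False by simp
    qed
    then show ?case by auto
  qed
qed

lemma tasep_height_eventually_right: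
  assumes "tasep_height P \<tau> h" "\<tau> \<le> s"
  shows "eventually (\<lambda>r. h j r = h j s) (at_right s)"
  using eventually_at_right_no_clock[of j s] eventually_at_right_less[of s]
proof eventually_elim
  case (elim r)
  then show ?case using tasep_height_const[OF assms, of r j] by simp
qed

lemma tasep_height_eventually_left:
  assumes h: "tasep_height P \<tau> h" and "\<tau> < s"
  shows "eventually (\<lambda>r. h j r = hleft h j s) (at_left s)"
proof -
  have "eventually (\<lambda>r. r \<in> {\<tau><..<s} \<and> P j \<inter> {r<..<s} = {}) (at_left s)"
    using eventually_at_left_real[OF \<open>\<tau> < s\<close>] eventually_at_left_no_clock by eventually_elim simp
  from eventually_happens'[OF trivial_limit_at_left_real this]
  obtain r\<^sub>0 where "\<tau> < r\<^sub>0" "r\<^sub>0 < s" and no_clock: "P j \<inter> {r\<^sub>0<..<s} = {}"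
    by auto
  have "eventually (\<lambda>r. h j r = h j r\<^sub>0) (at_left s)"
    using eventually_at_left_real[OF \<open>r\<^sub>0 < s\<close>]
  proof eventually_elim
    case (elim r)
    then have "P j \<inter> {r\<^sub>0<..r} = {}" using no_clock by auto
    with elim show ?case
      using tasep_height_const[OF h, of r\<^sub>0 r j] \<open>\<tau> < r\<^sub>0\<close> by simp
  qed
  moreover from this have "hleft h j s = h j r\<^sub>0"
    unfolding hleft_def by (intro tendsto_Lim trivial_limit_at_left_real tendsto_eventually)
  ultimately show ?thesis by simp
qed

lemma tasep_height_eq_hleft:
  assumes h: "tasep_height P \<tau> h" and "\<tau> < s"
  shows "h j s = hleft h j s +
    (if s \<in> P j \<and> occupied (\<lambda>k. hleft h k s) j \<and> \<not> occupied (\<lambda>k. hleft h k s) (j + 1) then 2 else 0)"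
proof (cases "s \<in> P j")
  case True
  then show ?thesis using tasep_height_jump[OF assms] by simp
next
  case False
  have "eventually (\<lambda>r. r \<in> {\<tau><..<s} \<and> P j \<inter> {r<..<s} = {} \<and> h j r = hleft h j s) (at_left s)"
    using eventually_at_left_real[OF \<open>\<tau> < s\<close>] eventually_at_left_no_clock
      tasep_height_eventually_left[OF assms]
    by eventually_elim simp
  from eventually_happens'[OF trivial_limit_at_left_real this]
  obtain r where r: "\<tau> < r" "r < s" "P j \<inter> {r<..<s} = {}" "h j r = hleft h j s"
    by auto
  moreover have "{r<..s} = insert s {r<..<s}" using \<open>r < s\<close> by auto
  ultimately have "P j \<inter> {r<..s} = {}" using False by auto
  with r show ?thesis
    using False tasep_height_const[OF h, of r s j] by simp
qed

lemma tasep_height_increment_left: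
  assumes "tasep_height P \<tau> h" "\<tau> < s"
  shows "hleft h j s - hleft h (j - 1) s \<in> {-1, 1}"
proof -
  have "eventually (\<lambda>r. \<tau> < r \<and> h j r = hleft h j s \<and> h (j - 1) r = hleft h (j - 1) s) (at_left s)"
    using eventually_at_left_real[OF \<open>\<tau> < s\<close>] tasep_height_eventually_left[OF assms]
      tasep_height_eventually_left[OF assms]
    by eventually_elim simp
  then obtain r where "\<tau> < r" "h j r = hleft h j s" "h (j - 1) r = hleft h (j - 1) s"
    using eventually_happens'[OF trivial_limit_at_left_real] by auto
  then show ?thesis
    using tasep_height_increment[OF assms(1), of r j] by simp
qed

lemma tasep_height_eventually_right_occupied:
  assumes "tasep_height P \<tau> h" "\<tau> \<le> s"
  shows "eventually (\<lambda>r. occupied (\<lambda>k. h k r) j \<longleftrightarrow> occupied (\<lambda>k. h k s) j) (at_right s)"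
  using tasep_height_eventually_right[OF assms, of j] tasep_height_eventually_right[OF assms, of "j - 1"]
  by eventually_elim (simp add: occupied_def)

lemma tasep_height_eventually_left_occupied:
  assumes "tasep_height P \<tau> h" "\<tau> < s"
  shows "eventually (\<lambda>r. occupied (\<lambda>k. h k r) j \<longleftrightarrow> occupied (\<lambda>k. hleft h k s) j) (at_left s)"
  using tasep_height_eventually_left[OF assms, of j] tasep_height_eventually_left[OF assms, of "j - 1"]
  by eventually_elim (simp add: occupied_def)

lemma tasep_height_mono:
  assumes h: "tasep_height P \<tau> h" and "\<tau> \<le> s" "s \<le> s'"
  shows "h j s \<le> h j s'"
proof (rule ccontr)
  assume "\<not> h j s \<le> h j s'"
  then have "h j s' < h j s" by simp
  have persist: "eventually (\<lambda>r'. \<not> h j r' < h j s) (at_right r)"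
    if "s \<le> r" "\<not> h j r < h j s" for r
    using tasep_height_eventually_right[OF h, of r j] that \<open>\<tau> \<le> s\<close> by (auto elim: eventually_mono)
  obtain \<sigma> where "s < \<sigma>" "h j \<sigma> < h j s" and before: "\<exists>\<^sub>F r in at_left \<sigma>. \<not> h j r < h j s"
    using switch_time_exists[of s s' "\<lambda>r. h j r < h j s"] \<open>s \<le> s'\<close> \<open>h j s' < h j s\<close> persist
    by blast
  have "\<exists>\<^sub>F r in at_left \<sigma>. \<not> h j r < h j s \<and> h j r = hleft h j \<sigma>"
    using before tasep_height_eventually_left[OF h] \<open>\<tau> \<le> s\<close> \<open>s < \<sigma>\<close>
    by (intro frequently_eventually_frequently) auto
  then have "h j s \<le> hleft h j \<sigma>" by (auto dest: frequently_ex)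
  also have "hleft h j \<sigma> \<le> h j \<sigma>"
    using tasep_height_eq_hleft[OF h, of \<sigma> j] \<open>\<tau> \<le> s\<close> \<open>s < \<sigma>\<close> by simp
  finally show False using \<open>h j \<sigma> < h j s\<close> by simp
qed

lemma eventually_at_left_unmatched_particle_iff:
  assumes h: "tasep_height P \<tau> h" "\<tau> < s" and g: "tasep_height P \<tau>' g" "\<tau>' < s"
    and x: "(x \<longlongrightarrow> v) (at_left s)"
  shows "eventually (\<lambda>r. unmatched_particle (\<lambda>k. g k r) (\<lambda>k. h k r) (x r) j \<longleftrightarrow>
    unmatched_particle (\<lambda>k. hleft g k s) (\<lambda>k. hleft h k s) v j) (at_left s)"
  using x[unfolded tendsto_discrete] tasep_height_eventually_left_occupied[OF h, of j]
    tasep_height_eventually_left_occupied[OF g, of j]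
  by eventually_elim (simp add: unmatched_particle_def)

lemma eventually_at_right_unmatched_particle_iff:
  assumes h: "tasep_height P \<tau> h" "\<tau> \<le> s" and g: "tasep_height P \<tau>' g" "\<tau>' \<le> s"
    and x: "eventually (\<lambda>r. x r = x s) (at_right s)"
  shows "eventually (\<lambda>r. unmatched_particle (\<lambda>k. g k r) (\<lambda>k. h k r) (x r) j \<longleftrightarrow>
    unmatched_particle (\<lambda>k. g k s) (\<lambda>k. h k s) (x s) j) (at_right s)"
  using x tasep_height_eventually_right_occupied[OF h, of j]
    tasep_height_eventually_right_occupied[OF g, of j]
  by eventually_elim (simp add: unmatched_particle_def)

lemma mismatch_hleftE:
  assumes h: "tasep_height P \<tau> h" "\<tau> < \<sigma>" and g: "tasep_height P \<tau>' g" "\<tau>' < \<sigma>"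
    and mismatch: "occupied (\<lambda>k. g k \<sigma>) j" "\<not> occupied (\<lambda>k. h k \<sigma>) j"
  obtains (before) "occupied (\<lambda>k. hleft g k \<sigma>) j" "\<not> occupied (\<lambda>k. hleft h k \<sigma>) j"
    | (from_right) "occupied (\<lambda>k. hleft g k \<sigma>) (j + 1)" "\<not> occupied (\<lambda>k. hleft h k \<sigma>) (j + 1)"
        "hleft g (j + 1) \<sigma> < g j \<sigma>"
    | (from_left) "occupied (\<lambda>k. hleft g k \<sigma>) (j - 1)" "\<not> occupied (\<lambda>k. hleft h k \<sigma>) (j - 1)"
        "hleft g (j - 1) \<sigma> < g j \<sigma>" "\<sigma> \<in> P (j - 1)" "h (j - 1) \<sigma> = hleft h (j - 1) \<sigma>"
proof -
  define hl gl where "hl k = hleft h k \<sigma>" and "gl k = hleft g k \<sigma>" for k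
  note before = before[folded hl_def gl_def] and from_right = from_right[folded hl_def gl_def]
    and from_left = from_left[folded hl_def gl_def]
  note H = tasep_height_eq_hleft[OF h, folded hl_def] and G = tasep_height_eq_hleft[OF g, folded gl_def]
  have hl_pm: "hl k - hl (k - 1) \<in> {-1, 1}" and gl_pm: "gl k - gl (k - 1) \<in> {-1, 1}" for k
    unfolding hl_def gl_def using tasep_height_increment_left h g by blast+
  have h_pm: "h k \<sigma> - h (k - 1) \<sigma> \<in> {-1, 1}" for k
    using tasep_height_increment h by (meson less_imp_le)
  from mismatch have g_j: "g j \<sigma> - g (j - 1) \<sigma> = -1" and h_j: "h j \<sigma> - h (j - 1) \<sigma> \<noteq> -1"
    unfolding occupied_def by auto
  consider (quiet) "\<sigma> \<notin> P (j - 1)" "\<sigma> \<notin> P j" | (here) "\<sigma> \<in> P j" "\<sigma> \<notin> P (j - 1)"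
    | (left) "\<sigma> \<in> P (j - 1)" "\<sigma> \<notin> P j"
    using clock_realisation_disjoint[of \<sigma> j "j - 1"] by force
  then show ?thesis
  proof cases
    case quiet
    then show ?thesis
      using H[of j] H[of "j - 1"] G[of j] G[of "j - 1"] mismatch before by (simp add: occupied_def)
  next
    case here
    have prev: "h (j - 1) \<sigma> = hl (j - 1)" "g (j - 1) \<sigma> = gl (j - 1)"
      using H[of "j - 1"] G[of "j - 1"] here by simp_all
    have "occupied gl j"
      using G[of j] gl_pm[of j] prev g_j by (auto simp: occupied_def split: if_splits)
    moreover have "occupied gl (j + 1)" "\<not> occupied hl (j + 1)" "g j \<sigma> = gl j"
      if "occupied hl j"
      using H[of j] G[of j] prev here \<open>occupied gl j\<close> g_j h_j that
      by (auto simp: occupied_def split: if_splits)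
    ultimately show ?thesis
      using before from_right unfolding occupied_def by force
  next
    case left
    have at_j: "h j \<sigma> = hl j" "g j \<sigma> = gl j"
      using H[of j] G[of j] left by simp_all
    show ?thesis
    proof (cases "occupied gl j")
      case True
      then show ?thesis
        using before H[of "j - 1"] at_j hl_pm[of j] h_pm[of j] h_j
        by (auto simp: occupied_def split: if_splits)
    next
      case False
      have "occupied gl (j - 1)"
        using G[of "j - 1"] at_j False gl_pm[of j] g_j by (auto simp: occupied_def split: if_splits)
      moreover have "h (j - 1) \<sigma> = hl (j - 1)" "\<not> occupied hl (j - 1)"
        using H[of "j - 1"] left at_j hl_pm[of j] h_j by (auto simp: occupied_def split: if_splits)
      ultimately show ?thesis
        using from_left left False gl_pm[of j] at_j unfolding occupied_def by force
    qed
  qed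
qed

lemma unmatched_particle_hleftE:
  assumes h: "tasep_height P \<tau> h" "\<tau> < \<sigma>" and g: "tasep_height P \<tau>' g" "\<tau>' < \<sigma>"
    and x: "backwards_path P h a t x" "a < \<sigma>" "\<sigma> \<le> t" "(x \<longlongrightarrow> v) (at_left \<sigma>)"
    and unmatched: "unmatched_particle (\<lambda>k. g k \<sigma>) (\<lambda>k. h k \<sigma>) (x \<sigma>) j"
  obtains j' where "unmatched_particle (\<lambda>k. hleft g k \<sigma>) (\<lambda>k. hleft h k \<sigma>) v j'"
    and "j' = j \<or> hleft g j' \<sigma> < g j \<sigma>"
proof -
  from unmatched have "x \<sigma> < j" and mismatch: "occupied (\<lambda>k. g k \<sigma>) j" "\<not> occupied (\<lambda>k. h k \<sigma>) j"
    unfolding unmatched_particle_def by auto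
  have "v < j"
  proof (rule ccontr)
    assume "\<not> v < j"
    with \<open>x \<sigma> < j\<close> have "v = x \<sigma> + 1" "h v \<sigma> = h (x \<sigma>) \<sigma> - 1"
      using backwards_path_left_limit(2)[OF x] by auto
    moreover from this \<open>x \<sigma> < j\<close> \<open>\<not> v < j\<close> have "x \<sigma> = j - 1" "v = j" by auto
    ultimately show False using mismatch(2) by (simp add: occupied_def)
  qed
  show ?thesis
  proof (cases rule: mismatch_hleftE[OF h g mismatch, case_names before from_right from_left])
    case before
    with \<open>v < j\<close> that show ?thesis unfolding unmatched_particle_def by blast
  next
    case from_right
    with \<open>v < j\<close> show ?thesis using that[of "j + 1"] unfolding unmatched_particle_def by simp
  next
    case from_left
    \<comment> \<open>a path sitting at \<open>j - 1\<close> when the clock there rings must see a jump of \<open>h\<close>\<close>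
    have "v \<noteq> j - 1"
    proof
      assume "v = j - 1"
      moreover have "x \<sigma> = j - 1"
      proof (rule ccontr)
        assume "x \<sigma> \<noteq> j - 1"
        then have "\<sigma> \<notin> P (x \<sigma>)"
          using from_left(4) clock_realisation_disjoint by blast
        with \<open>v = j - 1\<close> \<open>x \<sigma> \<noteq> j - 1\<close> show False
          using backwards_path_left_limit(1)[OF x] by simp
      qed
      ultimately show False
        using backwards_path_left_limit(1)[OF x] from_left(4,5) by simp
    qed
    with \<open>v < j\<close> from_left show ?thesis using that[of "j - 1"] unfolding unmatched_particle_def by simp
  qed
qed

lemma no_unmatched_particle:
  assumes h: "tasep_height P \<tau> h" and x: "backwards_path P h a t x"
    and "\<tau> \<le> t\<^sub>1" "a \<le> t\<^sub>1" "t\<^sub>2 \<le> t"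
    and g: "tasep_height P t\<^sub>1 g" and bound: "\<And>j. L \<le> g j t\<^sub>1"
    and init: "\<And>j. \<not> unmatched_particle (\<lambda>k. g k t\<^sub>1) (\<lambda>k. h k t\<^sub>1) (x t\<^sub>1) j"
    and "t\<^sub>1 \<le> s" "s \<le> t\<^sub>2"
  shows "\<not> unmatched_particle (\<lambda>k. g k s) (\<lambda>k. h k s) (x s) j"
proof -
  \<comment> \<open>a new unmatched particle is inherited from a site where \<open>g\<close> is lower: induct on that height\<close>
  have "\<not> unmatched_particle (\<lambda>k. g k s) (\<lambda>k. h k s) (x s) j"
    if "t\<^sub>1 \<le> s" "s \<le> t\<^sub>2" "g j s < L + int n" for n j s
    using that
  proof (induction n arbitrary: j s)
    case 0
    then show ?case
      using tasep_height_mono[OF g order_refl \<open>t\<^sub>1 \<le> s\<close>, of j] bound[of j] by simp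
  next
    case (Suc n)
    let ?U = "\<lambda>r. unmatched_particle (\<lambda>k. g k r) (\<lambda>k. h k r) (x r) j"
    show ?case
    proof
      assume "?U s"
      have persist: "eventually (\<lambda>r'. \<not> ?U r') (at_right r)" if "t\<^sub>1 \<le> r" "r < s" "\<not> ?U r" for r
      proof -
        from that Suc.prems assms(3-5) have "\<tau> \<le> r" "a \<le> r" "r < t" by linarith+
        then have "eventually (\<lambda>r'. ?U r' \<longleftrightarrow> ?U r) (at_right r)"
          by (intro eventually_at_right_unmatched_particle_iff[OF h _ g \<open>t\<^sub>1 \<le> r\<close>]
              backwards_path_eventually_right[OF x])
        with \<open>\<not> ?U r\<close> show ?thesis by (auto elim: eventually_mono)
      qed
      obtain \<sigma> where "t\<^sub>1 < \<sigma>" "\<sigma> \<le> s" "?U \<sigma>" and before: "\<exists>\<^sub>F r in at_left \<sigma>. \<not> ?U r"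
        using switch_time_exists[of t\<^sub>1 s ?U] Suc.prems(1) init \<open>?U s\<close> persist by blast
      from \<open>t\<^sub>1 < \<sigma>\<close> \<open>\<sigma> \<le> s\<close> Suc.prems assms(3-5) have "\<tau> < \<sigma>" "a < \<sigma>" "\<sigma> \<le> t"
        by linarith+
      then obtain v where v: "(x \<longlongrightarrow> v) (at_left \<sigma>)"
        using backwards_path_left_limit_exists[OF x] by blast
      obtain j' where j': "unmatched_particle (\<lambda>k. hleft g k \<sigma>) (\<lambda>k. hleft h k \<sigma>) v j'"
        and "j' = j \<or> hleft g j' \<sigma> < g j \<sigma>"
        using unmatched_particle_hleftE[OF h \<open>\<tau> < \<sigma>\<close> g \<open>t\<^sub>1 < \<sigma>\<close> x \<open>a < \<sigma>\<close> \<open>\<sigma> \<le> t\<close> v \<open>?U \<sigma>\<close>] .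
      have "eventually (\<lambda>r. t\<^sub>1 < r \<and> r < \<sigma> \<and> unmatched_particle (\<lambda>k. g k r) (\<lambda>k. h k r) (x r) j'
          \<and> g j' r = hleft g j' \<sigma>) (at_left \<sigma>)"
        using eventually_at_left_real[OF \<open>t\<^sub>1 < \<sigma>\<close>]
          eventually_at_left_unmatched_particle_iff[OF h \<open>\<tau> < \<sigma>\<close> g \<open>t\<^sub>1 < \<sigma>\<close> v, of j']
          tasep_height_eventually_left[OF g \<open>t\<^sub>1 < \<sigma>\<close>, of j']
        by eventually_elim (use j' in simp)
      from frequently_ex[OF frequently_eventually_frequently[OF before this]]
      obtain r where "\<not> ?U r" "t\<^sub>1 < r" "r < \<sigma>"
        and unmatched_r: "unmatched_particle (\<lambda>k. g k r) (\<lambda>k. h k r) (x r) j'"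
        and "g j' r = hleft g j' \<sigma>"
        by blast
      with \<open>j' = j \<or> hleft g j' \<sigma> < g j \<sigma>\<close> have "g j' r < g j \<sigma>" by auto
      also have "g j \<sigma> \<le> g j s"
        using tasep_height_mono[OF g] \<open>t\<^sub>1 < \<sigma>\<close> \<open>\<sigma> \<le> s\<close> by simp
      finally have "g j' r < L + int n" using Suc.prems(3) by simp
      with Suc.IH[of r j'] \<open>t\<^sub>1 < r\<close> \<open>r < \<sigma>\<close> \<open>\<sigma> \<le> s\<close> Suc.prems(2) unmatched_r show False
        by simp
    qed
  qed
  from this[where n = "nat (g j s - L) + 1"] show ?thesis
    using \<open>t\<^sub>1 \<le> s\<close> \<open>s \<le> t\<^sub>2\<close> by simp
qed

lemma leftmost_backwards_path_left_limit_le_meeting: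
  assumes h: "tasep_height P \<tau> h" "\<tau> < \<sigma>"
    and x: "backwards_path P h a t x" "a < \<sigma>" "\<sigma> \<le> t" "(x \<longlongrightarrow> u) (at_left \<sigma>)"
    and g: "tasep_height P \<tau>' g" "\<tau>' < \<sigma>"
    and y: "leftmost_backwards_path P g a' t' y" "a' < \<sigma>" "\<sigma> \<le> t'" "(y \<longlongrightarrow> w) (at_left \<sigma>)"
    and meet: "y \<sigma> = x \<sigma>"
    and matched: "\<And>j. \<not> unmatched_particle (\<lambda>k. hleft g k \<sigma>) (\<lambda>k. hleft h k \<sigma>) u j"
  shows "w \<le> u"
proof (rule ccontr)
  assume "\<not> w \<le> u"
  define b where "b = x \<sigma>"
  define hl gl where "hl k = hleft h k \<sigma>" and "gl k = hleft g k \<sigma>" for k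
  note H = tasep_height_eq_hleft[OF h, folded hl_def] and G = tasep_height_eq_hleft[OF g, folded gl_def]
  have gl_pm: "gl k - gl (k - 1) \<in> {-1, 1}" for k
    unfolding gl_def using tasep_height_increment_left g by blast
  have y': "backwards_path P g a' t' y"
    using y(1) unfolding leftmost_backwards_path_def by blast
  note u_stay = backwards_path_left_limit(1)[OF x, folded b_def]
    and u_move = backwards_path_left_limit(2)[OF x, folded b_def]
  note w_stay = backwards_path_left_limit(1)[OF y' y(2-4), unfolded meet, folded b_def]
    and w_move = backwards_path_left_limit(2)[OF y' y(2-4), unfolded meet, folded b_def]
  have matched': "occupied hl j" if "u < j" "occupied gl j" for j
    using that matched[of j, unfolded unmatched_particle_def, folded hl_def gl_def] by simp
  have "w \<le> b + 1"
    using w_move by force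
  from \<open>\<not> w \<le> u\<close> u_stay w_stay have "\<sigma> \<in> P b" by auto
  then have quiet: "\<sigma> \<notin> P (b - 1)" "\<sigma> \<notin> P (b + 1)"
    using clock_realisation_disjoint[of \<sigma> b "b - 1"] clock_realisation_disjoint[of \<sigma> b "b + 1"]
    by auto
  show False
  proof (cases "h b \<sigma> = hl b + 2")
    case True
    then have "u = b" using u_stay by (simp add: hl_def)
    with \<open>\<not> w \<le> u\<close> \<open>w \<le> b + 1\<close> have "w = b + 1" by simp
    then have "g (b + 1) \<sigma> = g b \<sigma> - 1" "g b \<sigma> \<noteq> gl b + 2"
      using w_move w_stay \<open>\<sigma> \<in> P b\<close> by (auto simp: gl_def)
    then have "occupied gl (b + 1)"
      using G[of b] G[of "b + 1"] quiet by (auto simp: occupied_def split: if_splits)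
    with matched'[of "b + 1"] \<open>u = b\<close> have "occupied hl (b + 1)" by simp
    with True H[of b] show False by (auto split: if_splits)
  next
    case False
    then have "u = b - 1" "h (b - 1) \<sigma> = h b \<sigma> - 1"
      using u_stay u_move \<open>\<sigma> \<in> P b\<close> \<open>\<not> w \<le> u\<close> \<open>w \<le> b + 1\<close> by (auto simp: hl_def)
    then have "\<not> occupied hl b"
      using H[of b] H[of "b - 1"] False quiet by (auto simp: occupied_def split: if_splits)
    with matched'[of b] \<open>u = b - 1\<close> have "\<not> occupied gl b" by auto
    then have "g b \<sigma> \<noteq> gl b + 2" "g (b - 1) \<sigma> = g b \<sigma> - 1"
      using G[of b] G[of "b - 1"] gl_pm[of b] quiet by (auto simp: occupied_def split: if_splits)
    then have "w = b - 1"
      using leftmost_backwards_path_left_limit[OF y] \<open>\<sigma> \<in> P b\<close> meet by (simp add: b_def gl_def)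
    with \<open>u = b - 1\<close> \<open>\<not> w \<le> u\<close> show False by simp
  qed
qed

lemma leftmost_backwards_path_left_limit_le:
  assumes h: "tasep_height P \<tau> h" "\<tau> < \<sigma>"
    and x: "backwards_path P h a t x" "a < \<sigma>" "\<sigma> \<le> t" "(x \<longlongrightarrow> u) (at_left \<sigma>)"
    and g: "tasep_height P \<tau>' g" "\<tau>' < \<sigma>"
    and y: "leftmost_backwards_path P g a' t' y" "a' < \<sigma>" "\<sigma> \<le> t'" "(y \<longlongrightarrow> w) (at_left \<sigma>)"
    and "y \<sigma> \<le> x \<sigma>"
    and matched: "\<And>j. \<not> unmatched_particle (\<lambda>k. hleft g k \<sigma>) (\<lambda>k. hleft h k \<sigma>) u j"
  shows "w \<le> u"
proof (cases "y \<sigma> < x \<sigma>")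
  case True
  have y': "backwards_path P g a' t' y"
    using y(1) unfolding leftmost_backwards_path_def by blast
  have "w \<le> y \<sigma> + 1" "x \<sigma> - 1 \<le> u"
    using backwards_path_left_limit(2)[OF y' y(2-4)] backwards_path_left_limit(2)[OF x] by force+
  show ?thesis
  proof (cases "\<sigma> \<in> P (y \<sigma>)")
    case True
    with \<open>y \<sigma> < x \<sigma>\<close> have "\<sigma> \<notin> P (x \<sigma>)"
      using clock_realisation_disjoint by force
    then have "u = x \<sigma>" using backwards_path_left_limit(1)[OF x] by simp
    with \<open>w \<le> y \<sigma> + 1\<close> \<open>y \<sigma> < x \<sigma>\<close> show ?thesis by simp
  next
    case False
    then have "w = y \<sigma>" using backwards_path_left_limit(1)[OF y' y(2-4)] by simp
    with \<open>x \<sigma> - 1 \<le> u\<close> \<open>y \<sigma> < x \<sigma>\<close> show ?thesis by simp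
  qed
next
  case False
  with \<open>y \<sigma> \<le> x \<sigma>\<close> have "y \<sigma> = x \<sigma>" by simp
  from leftmost_backwards_path_left_limit_le_meeting[OF h x g y this matched] show ?thesis .
qed

lemma leftmost_backwards_path_le:
  assumes h: "tasep_height P \<tau> h" and x: "backwards_path P h a t x"
    and "\<tau> \<le> t\<^sub>1" "a \<le> t\<^sub>1" "t\<^sub>2 \<le> t"
    and g: "tasep_height P t\<^sub>1 g" and y: "leftmost_backwards_path P g t\<^sub>1 t\<^sub>2 y"
    and matched: "\<And>s j. t\<^sub>1 \<le> s \<Longrightarrow> s \<le> t\<^sub>2 \<Longrightarrow>
      \<not> unmatched_particle (\<lambda>k. g k s) (\<lambda>k. h k s) (x s) j"
    and "y t\<^sub>2 \<le> x t\<^sub>2" "t\<^sub>1 \<le> s" "s \<le> t\<^sub>2"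
  shows "y s \<le> x s"
proof (rule ccontr)
  assume "\<not> y s \<le> x s"
  have y': "backwards_path P g t\<^sub>1 t\<^sub>2 y"
    using y unfolding leftmost_backwards_path_def by blast
  have persist: "eventually (\<lambda>r'. \<not> y r' \<le> x r') (at_right r)"
    if "s \<le> r" "r < t\<^sub>2" "\<not> y r \<le> x r" for r
  proof -
    from that assms(3-5) \<open>t\<^sub>1 \<le> s\<close> have "a \<le> r" "r < t" "t\<^sub>1 \<le> r" by linarith+
    show ?thesis
      using backwards_path_eventually_right[OF x \<open>a \<le> r\<close> \<open>r < t\<close>]
        backwards_path_eventually_right[OF y' \<open>t\<^sub>1 \<le> r\<close> \<open>r < t\<^sub>2\<close>]
      by eventually_elim (use that(3) in simp)
  qed
  obtain \<sigma> where "s < \<sigma>" "\<sigma> \<le> t\<^sub>2" "y \<sigma> \<le> x \<sigma>"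
    and before: "\<exists>\<^sub>F r in at_left \<sigma>. \<not> y r \<le> x r"
    using switch_time_exists[of s t\<^sub>2 "\<lambda>r. y r \<le> x r"] \<open>s \<le> t\<^sub>2\<close> \<open>\<not> y s \<le> x s\<close>
      \<open>y t\<^sub>2 \<le> x t\<^sub>2\<close> persist by blast
  from \<open>s < \<sigma>\<close> \<open>\<sigma> \<le> t\<^sub>2\<close> assms(3-5) \<open>t\<^sub>1 \<le> s\<close> have "\<tau> < \<sigma>" "a < \<sigma>" "\<sigma> \<le> t" "t\<^sub>1 < \<sigma>"
    by linarith+
  obtain u w where u: "(x \<longlongrightarrow> u) (at_left \<sigma>)" and w: "(y \<longlongrightarrow> w) (at_left \<sigma>)"
    using backwards_path_left_limit_exists[OF x \<open>a < \<sigma>\<close> \<open>\<sigma> \<le> t\<close>]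
      backwards_path_left_limit_exists[OF y' \<open>t\<^sub>1 < \<sigma>\<close> \<open>\<sigma> \<le> t\<^sub>2\<close>] by blast
  have "\<not> unmatched_particle (\<lambda>k. hleft g k \<sigma>) (\<lambda>k. hleft h k \<sigma>) u j" for j
  proof -
    have "eventually (\<lambda>r. t\<^sub>1 < r \<and> r < \<sigma> \<and>
        (unmatched_particle (\<lambda>k. g k r) (\<lambda>k. h k r) (x r) j \<longleftrightarrow>
         unmatched_particle (\<lambda>k. hleft g k \<sigma>) (\<lambda>k. hleft h k \<sigma>) u j)) (at_left \<sigma>)"
      using eventually_at_left_real[OF \<open>t\<^sub>1 < \<sigma>\<close>]
        eventually_at_left_unmatched_particle_iff[OF h \<open>\<tau> < \<sigma>\<close> g \<open>t\<^sub>1 < \<sigma>\<close> u, of j]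
      by eventually_elim simp
    from eventually_happens'[OF trivial_limit_at_left_real this] show ?thesis
      using matched \<open>\<sigma> \<le> t\<^sub>2\<close> by fastforce
  qed
  then have "w \<le> u"
    using leftmost_backwards_path_left_limit_le[OF h \<open>\<tau> < \<sigma>\<close> x \<open>a < \<sigma>\<close> \<open>\<sigma> \<le> t\<close> u
        g \<open>t\<^sub>1 < \<sigma>\<close> y \<open>t\<^sub>1 < \<sigma>\<close> \<open>\<sigma> \<le> t\<^sub>2\<close> w \<open>y \<sigma> \<le> x \<sigma>\<close>] by blast
  moreover have "\<exists>\<^sub>F r in at_left \<sigma>. \<not> y r \<le> x r \<and> x r = u \<and> y r = w"
    using before u[unfolded tendsto_discrete] w[unfolded tendsto_discrete]
    by (intro frequently_eventually_frequently eventually_conj)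
  ultimately show False
    by (auto dest: frequently_ex)
qed

end

lemma occupied_step: "occupied (\<lambda>k. \<bar>k - y\<bar>) j \<longleftrightarrow> j \<le> y"
  unfolding occupied_def by auto

theorem proposition2p2:
  fixes P :: "int \<Rightarrow> real set"
    and h hstep :: "int \<Rightarrow> real \<Rightarrow> int"
    and x xstep :: "real \<Rightarrow> int"
    and t t1 t2 :: real and x1 x2 :: int
  assumes "clock_realisation P"
    and "tasep_height P 0 h"
    and "backwards_path P h 0 t x"
    and "0 \<le> t1" and "t1 < t2" and "t2 \<le> t"
    and "x t1 \<ge> x1" and "x t2 \<ge> x2"
    and "step_height P x1 t1 hstep"
    and "leftmost_backwards_path P hstep t1 t2 xstep" and "xstep t2 = x2"
  shows "\<forall>\<tau>\<in>{t1..t2}. x \<tau> \<ge> xstep \<tau>"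
proof
  fix s assume "s \<in> {t1..t2}"
  from \<open>step_height P x1 t1 hstep\<close> have g: "tasep_height P t1 hstep"
    and g_init: "\<And>j. hstep j t1 = \<bar>j - x1\<bar>"
    unfolding step_height_def by auto
  have init: "\<not> unmatched_particle (\<lambda>k. hstep k t1) (\<lambda>k. h k t1) (x t1) j" for j
    using \<open>x t1 \<ge> x1\<close> by (simp add: g_init occupied_step unmatched_particle_def)
  have matched: "\<not> unmatched_particle (\<lambda>k. hstep k r) (\<lambda>k. h k r) (x r) j"
    if "t1 \<le> r" "r \<le> t2" for r j
    by (rule no_unmatched_particle[OF assms(1-3) _ _ _ g _ init, where L = 0 and t\<^sub>2 = t2])
      (use assms(4,6) that g_init in auto)
  show "x s \<ge> xstep s"
    using leftmost_backwards_path_le[OF assms(1-3) _ _ _ g assms(10) matched] assms(4,6,8,11)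
      \<open>s \<in> {t1..t2}\<close> by auto
qed

end
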